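(* Let $K$ be a field of characteristic zero, let $(p_n(x))_{n\ge 0}$ be a sequence of polynomials in $K[x]$ with $\deg p_n=n$, and let $F^{(y)}:K[x]\to K[x,y]$ be a $K$-linear operator which is shift-invariant, i.e. $F^{(y)}E^{c}=E^{c}F^{(y)}$ for every $c\in K$. Then the following are equivalent: (1) for all $n\ge 0$, $F^{(y)}p_n(x)=\sum_{k=0}^{n}p_k(x)\,p_{n-k}(y)$; (2) the operator $P_x=\epsilon_y\circ F^{(y)}$ is an invertible shift-invariant operator on $K[x]$, the sequence $(p_n(x))_{n\ge0}$ is a Sheffer sequence relative to the divided power sequence $(P_x^{-1}p_n(x))_{n\ge 0}$, and $F^{(y)}=P_yE^{y}$.
   Context: For $c\in K$, $E^{c}$ denotes the shift $p(x)\mapsto p(x+c)$ (acting on the variable $x$, on $K[x]$ or on $K[x,y]$), and $E^{y}:K[x]\to K[x,y]$ is $p(x)\mapsto p(x+y)$. An operator on $K[x]$ is shift-invariant if it commutes with all $E^{c}$, $c\in K$. $\epsilon_y:K[x,y]\to K[x]$ is evaluation at $y=0$. For an operator $\phi_x$ on $K[x]$, $\phi_y$ denotes the corresponding operator on $K[y]$ obtained by renaming $x$ to $y$ (i.e. $\phi_y\circ\pi=\pi\circ\phi_x$ with $\pi:K[x]\to K[y]$ the isomorphism $x\mapsto y$), extended $K[x]$-linearly to $K[x,y]$; operators on $K[x]$ are extended $K[y]$-linearly to $K[x,y]$. A divided power sequence is a sequence of polynomials $(q_n(x))_{n\ge0}$ with $\deg q_n=n$ and $q_n(x+y)=\sum_{k=0}^n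 q_k(x)q_{n-k}(y)$ for all $n$. A sequence $(s_n(x))_{n\ge0}$ with $\deg s_n=n$ is Sheffer relative to a divided power sequence $(q_n)$ if $s_n(x+y)=\sum_{k=0}^{n}q_{n-k}(y)\,s_k(x)$ for all $n$. *)

theory Defs
  imports "HOL-Computational_Algebra.Polynomial"
begin

text \<open>K[x] is "'a poly" (variable x). K[x,y] is "'a poly poly":
  the outer variable is y, the coefficients are polynomials in x.
  So a polynomial r(x) in K[x] embeds into K[x,y] as the constant [:r:],
  and a polynomial s in K[y] (stored as "'a poly") embeds as ylift s.\<close>

definition xlift :: "'a::zero poly \<Rightarrow> 'a poly poly" where
  "xlift r = [:r:]"

definition ylift :: "'a::zero poly \<Rightarrow> 'a poly poly" where
  "ylift s = map_poly (\<lambda>c. [:c:]) s"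

definition shift :: "'a::comm_ring_1 \<Rightarrow> 'a poly \<Rightarrow> 'a poly" where
  "shift c p = pcompose p [:c, 1:]"

definition shift2 :: "'a::comm_ring_1 \<Rightarrow> 'a poly poly \<Rightarrow> 'a poly poly" where
  "shift2 c q = map_poly (shift c) q"

text \<open>E^y : K[x] \<rightarrow> K[x,y], p(x) \<mapsto> p(x+y).\<close>
definition Ey :: "'a::comm_ring_1 poly \<Rightarrow> 'a poly poly" where
  "Ey p = poly (map_poly (\<lambda>c. [:[:c:]:]) p) ([:[:0, 1:]:] + [:0, 1:])"

definition eps_y :: "'a::comm_ring_1 poly poly \<Rightarrow> 'a poly" where
  "eps_y q = poly q 0"

definition swapxy :: "'a::comm_ring_1 poly poly \<Rightarrow> 'a poly poly" where
  "swapxy q = (\<Sum>i\<le>degree q. \<Sum>j\<le>degree (coeff q i).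
                  monom (monom (coeff (coeff q i) j) i) j)"

text \<open>For an operator phi on K[x], phi_y is the same operator acting on the variable y,
  extended K[x]-linearly to K[x,y].\<close>
definition op_y :: "('a::comm_ring_1 poly \<Rightarrow> 'a poly) \<Rightarrow> 'a poly poly \<Rightarrow> 'a poly poly" where
  "op_y \<phi> q = swapxy (map_poly \<phi> (swapxy q))"

definition klinear :: "('a::comm_ring_1 poly \<Rightarrow> 'a poly) \<Rightarrow> bool" where
  "klinear f \<longleftrightarrow> (\<forall>p q. f (p + q) = f p + f q) \<and> (\<forall>c p. f (smult c p) = smult c (f p))"

definition klinear2 :: "('a::comm_ring_1 poly \<Rightarrow> 'a poly poly) \<Rightarrow> bool" where
  "klinear2 f \<longleftrightarrow> (\<forall>p q. f (p + q) = f p + f q) \<and>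
                   (\<forall>c p. f (smult c p) = smult [:c:] (f p))"

definition shift_invariant :: "('a::comm_ring_1 poly \<Rightarrow> 'a poly) \<Rightarrow> bool" where
  "shift_invariant f \<longleftrightarrow> (\<forall>c p. f (shift c p) = shift c (f p))"

definition shift_invariant2 :: "('a::comm_ring_1 poly \<Rightarrow> 'a poly poly) \<Rightarrow> bool" where
  "shift_invariant2 f \<longleftrightarrow> (\<forall>c p. f (shift c p) = shift2 c (f p))"

definition degree_seq :: "(nat \<Rightarrow> 'a::zero poly) \<Rightarrow> bool" where
  "degree_seq s \<longleftrightarrow> (\<forall>n. s n \<noteq> 0 \<and> degree (s n) = n)"

definition divided_power_seq :: "(nat \<Rightarrow> 'a::comm_ring_1 poly) \<Rightarrow> bool" where
  "divided_power_seq q \<longleftrightarrow> degree_seq q \<and>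
     (\<forall>n. Ey (q n) = (\<Sum>k\<le>n. xlift (q k) * ylift (q (n - k))))"

definition sheffer_rel :: "(nat \<Rightarrow> 'a::comm_ring_1 poly) \<Rightarrow> (nat \<Rightarrow> 'a poly) \<Rightarrow> bool" where
  "sheffer_rel q s \<longleftrightarrow> degree_seq s \<and>
     (\<forall>n. Ey (s n) = (\<Sum>k\<le>n. ylift (q (n - k)) * xlift (s k)))"

end

theory Submission
  imports Defs
begin

(* Put P = eps_y o F. Under (1), P p_n = sum_k p_{n-k}(0) p_k has leading term p_0(0) p_n with
   p_0(0) nonzero, so P sends the basis (p_n) to a sequence of exact degrees and is therefore
   bijective and degree-preserving. (1) also makes every F p_n, hence by linearity every F r,
   symmetric in x and y; symmetry and shift-invariance give F r (x, c) = (P r)(x + c), that is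
   F r = E^y P r = P_y E^y r. Applying P_y^-1 to (1) gives the Sheffer identity of p relative to
   (P^-1 p_n), and applying P^-1 in x to that identity gives the binomial identity of P^-1 p_n.
   Conversely, pushing the Sheffer identity through P_y gives (1). *)

lemma coeff_swapxy: "coeff (coeff (swapxy q) j) i = coeff (coeff q i) j"
proof -
  have "coeff (coeff (swapxy q) j) i =
     (\<Sum>i'\<le>degree q. \<Sum>j'\<le>degree (coeff q i'). if j' = j \<and> i' = i then coeff (coeff q i') j' else 0)"
    unfolding swapxy_def coeff_sum coeff_monom by (intro sum.cong refl) auto
  also have "\<dots> = (\<Sum>i'\<le>degree q. if i' = i then coeff (coeff q i') j else 0)"
    by (intro sum.cong refl) (auto simp: sum.delta' coeff_eq_0 not_le)
  also have "\<dots> = coeff (coeff q i) j"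
    by (auto simp: sum.delta' coeff_eq_0 not_le)
  finally show ?thesis .
qed

lemma poly_poly_eqI: "(\<And>i j. coeff (coeff P j) i = coeff (coeff Q j) i) \<Longrightarrow> P = Q"
  by (intro poly_eqI) auto

lemma swapxy_0 [simp]: "swapxy 0 = 0"
  by (rule poly_poly_eqI) (simp add: coeff_swapxy)

lemma swapxy_add: "swapxy (a + b) = swapxy a + swapxy b"
  by (rule poly_poly_eqI) (simp add: coeff_swapxy)

lemma swapxy_sum: "swapxy (\<Sum>k\<in>A. f k) = (\<Sum>k\<in>A. swapxy (f k))"
  by (induction A rule: infinite_finite_induct) (auto simp: swapxy_add)

lemma swapxy_smult: "swapxy (smult [:c:] a) = smult [:c:] (swapxy a)"
  by (rule poly_poly_eqI) (simp add: coeff_swapxy)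

lemma coeff_coeff_xlift_ylift: "coeff (coeff (xlift a * ylift b) j) i = coeff a i * coeff b j"
  by (simp add: xlift_def ylift_def coeff_map_poly mult.commute)

lemma swapxy_xlift_ylift: "swapxy (xlift a * ylift b) = xlift b * ylift a"
  by (rule poly_poly_eqI) (simp add: coeff_swapxy coeff_coeff_xlift_ylift)

lemma Ey_0 [simp]: "Ey 0 = 0"
  by (simp add: Ey_def)

lemma Ey_pCons: "Ey (pCons a g) = [:[:a:]:] + ([:[:0, 1:]:] + [:0, 1:]) * Ey g"
  by (simp add: Ey_def map_poly_pCons)

lemma swapxy_Ey: "swapxy (Ey g) = Ey g"
proof (induction g)
  case 0
  then show ?case by simp
next
  case (pCons a g)
  have mult_x: "coeff (coeff ([:[:0, 1:]:] * H) j) i = (if i = 0 then 0 else coeff (coeff H j) (i - 1))"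
    and mult_y: "coeff (coeff ([:0, 1:] * H) j) i = (if j = 0 then 0 else coeff (coeff H (j - 1)) i)"
    for H :: "'a poly poly" and i j
    by (simp_all add: coeff_pCons split: nat.split)
  have "swapxy ([:[:a:]:] + ([:[:0, 1:]:] + [:0, 1:]) * Ey g) = [:[:a:]:] + ([:[:0, 1:]:] + [:0, 1:]) * Ey g"
    using arg_cong[OF pCons.IH, of "\<lambda>P. coeff (coeff P _) _"]
    by (intro poly_poly_eqI)
      (auto simp: coeff_swapxy distrib_right mult_x mult_y coeff_pCons split: nat.split)
  then show ?case
    by (simp add: Ey_pCons)
qed

lemma poly_Ey_const: "poly (Ey g) [:c:] = shift c g"
  by (induction g) (simp_all add: Ey_pCons shift_def pcompose_pCons algebra_simps)

lemma coeff_poly_const: "coeff (poly R [:c:]) i = poly (map_poly (\<lambda>q. coeff q i) R) c"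
  by (induction R) (simp_all add: map_poly_pCons)

lemma poly_const_eqI:
  fixes Q1 Q2 :: "'a::{idom,ring_char_0} poly poly"
  assumes "\<And>c. poly Q1 [:c:] = poly Q2 [:c:]"
  shows "Q1 = Q2"
proof (rule poly_poly_eqI)
  fix i j
  have "poly (map_poly (\<lambda>q. coeff q i) (Q1 - Q2)) c = 0" for c
    using assms[of c] by (simp flip: coeff_poly_const)
  then have "map_poly (\<lambda>q. coeff q i) (Q1 - Q2) = 0"
    using poly_all_0_iff_0 by blast
  then have "coeff (map_poly (\<lambda>q. coeff q i) (Q1 - Q2)) j = 0"
    by simp
  then show "coeff (coeff Q1 j) i = coeff (coeff Q2 j) i"
    by (simp add: coeff_map_poly)
qed

lemma poly_swapxy_const: "poly (swapxy H) [:c:] = map_poly (\<lambda>q. poly q c) H"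
proof (rule poly_eqI)
  fix i
  have "map_poly (\<lambda>q. coeff q i) (swapxy H) = coeff H i"
    by (rule poly_eqI) (simp add: coeff_map_poly coeff_swapxy)
  then show "coeff (poly (swapxy H) [:c:]) i = coeff (map_poly (\<lambda>q. poly q c) H) i"
    by (simp add: coeff_poly_const coeff_map_poly)
qed

lemma klinear_add: "klinear T \<Longrightarrow> T (a + b) = T a + T b"
  unfolding klinear_def by blast

lemma klinear_smult: "klinear T \<Longrightarrow> T (smult c a) = smult c (T a)"
  unfolding klinear_def by blast

lemma klinear_0: "klinear T \<Longrightarrow> T 0 = 0"
  by (metis klinear_add add_cancel_right_right add_0)

lemma klinear_diff: "klinear T \<Longrightarrow> T (a - b) = T a - T b"
  by (metis klinear_add diff_add_cancel add_diff_cancel)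

lemma klinear_sum: "klinear T \<Longrightarrow> T (\<Sum>k\<in>A. f k) = (\<Sum>k\<in>A. T (f k))"
  by (induction A rule: infinite_finite_induct) (auto simp: klinear_0 klinear_add)

lemma klinear_inv: "klinear T \<Longrightarrow> bij T \<Longrightarrow> klinear (inv T)"
  unfolding klinear_def by (metis bij_inv_eq_iff)

lemma shift_invariant_inv: "shift_invariant T \<Longrightarrow> bij T \<Longrightarrow> shift_invariant (inv T)"
  unfolding shift_invariant_def by (metis bij_inv_eq_iff)

lemma klinear2_add: "klinear2 F \<Longrightarrow> F (a + b) = F a + F b"
  unfolding klinear2_def by blast

lemma klinear2_smult: "klinear2 F \<Longrightarrow> F (smult c a) = smult [:c:] (F a)"
  unfolding klinear2_def by blast

lemma klinear2_0: "klinear2 F \<Longrightarrow> F 0 = 0"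
  by (metis klinear2_add add_cancel_right_right add_0)

lemma klinear2_sum: "klinear2 F \<Longrightarrow> F (\<Sum>k\<in>A. f k) = (\<Sum>k\<in>A. F (f k))"
  by (induction A rule: infinite_finite_induct) (auto simp: klinear2_0 klinear2_add)

lemma map_poly_klinear_add: "klinear T \<Longrightarrow> map_poly T (A + B) = map_poly T A + map_poly T B"
  by (rule poly_eqI) (simp add: coeff_map_poly klinear_0 klinear_add)

lemma map_poly_klinear_sum:
  "klinear T \<Longrightarrow> map_poly T (\<Sum>k\<in>A. f k) = (\<Sum>k\<in>A. map_poly T (f k))"
  by (induction A rule: infinite_finite_induct) (auto simp: map_poly_klinear_add)

lemma map_poly_klinear_xlift_ylift:
  "klinear T \<Longrightarrow> map_poly T (xlift b * ylift a) = xlift (T b) * ylift a"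
  by (rule poly_eqI) (simp add: xlift_def ylift_def coeff_map_poly klinear_0 klinear_smult)

lemma poly_map_poly_klinear: "klinear T \<Longrightarrow> poly (map_poly T Q) [:c:] = T (poly Q [:c:])"
  by (induction Q) (simp_all add: map_poly_pCons klinear_0 klinear_add klinear_smult)

lemma map_poly_klinear_Ey:
  fixes T :: "'a::{idom,ring_char_0} poly \<Rightarrow> 'a poly"
  assumes "klinear T" "shift_invariant T"
  shows "map_poly T (Ey f) = Ey (T f)"
  using assms by (intro poly_const_eqI) (simp add: poly_map_poly_klinear poly_Ey_const shift_invariant_def)

lemma op_y_sum: "klinear T \<Longrightarrow> op_y T (\<Sum>k\<in>A. f k) = (\<Sum>k\<in>A. op_y T (f k))"
  by (simp add: op_y_def swapxy_sum map_poly_klinear_sum)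

lemma op_y_xlift_ylift: "klinear T \<Longrightarrow> op_y T (xlift a * ylift b) = xlift a * ylift (T b)"
  by (simp add: op_y_def swapxy_xlift_ylift map_poly_klinear_xlift_ylift)

lemma op_y_Ey:
  fixes T :: "'a::{idom,ring_char_0} poly \<Rightarrow> 'a poly"
  assumes "klinear T" "shift_invariant T"
  shows "op_y T (Ey f) = Ey (T f)"
  by (simp add: op_y_def swapxy_Ey map_poly_klinear_Ey[OF assms])

lemma degree_seq_expansion:
  fixes p :: "nat \<Rightarrow> 'a::field poly"
  assumes p: "degree_seq p" and "degree g \<le> n"
  shows "\<exists>c. g = (\<Sum>k\<le>n. smult (c k) (p k))"
  using assms(2)
proof (induction n arbitrary: g)
  case 0
  obtain a where "p 0 = [:a:]" "a \<noteq> 0"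
    using p unfolding degree_seq_def by (metis degree_0_id pCons_0_0)
  moreover have "g = [:coeff g 0:]"
    using 0 by (metis degree_0_id le_zero_eq)
  ultimately have "g = smult (coeff g 0 / a) (p 0)"
    by simp
  then show ?case
    by auto
next
  case (Suc n)
  define d where "d = coeff g (Suc n) / lead_coeff (p (Suc n))"
  have "degree (p (Suc n)) = Suc n" "lead_coeff (p (Suc n)) \<noteq> 0"
    using p leading_coeff_0_iff unfolding degree_seq_def by blast+
  then have "degree (g - smult d (p (Suc n))) \<le> Suc n"
    and "coeff (g - smult d (p (Suc n))) (Suc n) = 0"
    using Suc.prems by (auto simp: d_def intro: degree_diff_le order.trans[OF degree_smult_le])
  then have "degree (g - smult d (p (Suc n))) \<le> n"
    by (metis eq_zero_or_degree_less degree_0 le_SucE less_Suc_eq_le zero_le)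
  then obtain c where c: "g - smult d (p (Suc n)) = (\<Sum>k\<le>n. smult (c k) (p k))"
    using Suc.IH by blast
  have "g = (\<Sum>k\<le>Suc n. smult ((c(Suc n := d)) k) (p k))"
    using c by (simp add: algebra_simps)
  then show ?case
    by blast
qed

lemma coeff_sum_smult_degree_seq:
  assumes "degree_seq q"
  shows "coeff (\<Sum>k\<le>m. smult (c k) (q k)) m = c m * lead_coeff (q m)"
proof -
  have "(\<Sum>k\<le>m. c k * coeff (q k) m) = (\<Sum>k\<le>m. if k = m then c m * coeff (q m) m else 0)"
    using assms by (intro sum.cong refl) (auto simp: degree_seq_def coeff_eq_0)
  then show ?thesis
    using assms by (simp add: coeff_sum degree_seq_def)
qed

lemma degree_sum_smult_degree_seq_le:
  assumes "degree_seq q"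
  shows "degree (\<Sum>k\<le>m. smult (c k) (q k)) \<le> m"
  using assms by (intro degree_sum_le) (auto simp: degree_seq_def intro: order.trans[OF degree_smult_le])

lemma sum_smult_degree_seq:
  fixes q :: "nat \<Rightarrow> 'a::idom poly"
  assumes "degree_seq q" "c m \<noteq> 0"
  shows "(\<Sum>k\<le>m. smult (c k) (q k)) \<noteq> 0" "degree (\<Sum>k\<le>m. smult (c k) (q k)) = m"
proof -
  have "lead_coeff (q m) \<noteq> 0"
    using assms(1) leading_coeff_0_iff unfolding degree_seq_def by blast
  then have "coeff (\<Sum>k\<le>m. smult (c k) (q k)) m \<noteq> 0"
    using assms by (simp add: coeff_sum_smult_degree_seq)
  then show "(\<Sum>k\<le>m. smult (c k) (q k)) \<noteq> 0" "degree (\<Sum>k\<le>m. smult (c k) (q k)) = m"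
    using degree_sum_smult_degree_seq_le[OF assms(1), of c m] le_degree[of _ m] by (auto intro: antisym)
qed

lemma klinear_degree_seq_image:
  fixes T :: "'a::field poly \<Rightarrow> 'a poly"
  assumes T: "klinear T" and p: "degree_seq p" and Tp: "degree_seq (\<lambda>n. T (p n))"
  shows "degree (T g) = degree g" "T g = 0 \<longleftrightarrow> g = 0" "bij T"
proof -
  have image_nonzero: "T g \<noteq> 0 \<and> degree (T g) = degree g" if "g \<noteq> 0" for g
  proof -
    obtain c where c: "g = (\<Sum>k\<le>degree g. smult (c k) (p k))"
      using degree_seq_expansion[OF p order_refl] by blast
    have "lead_coeff g = c (degree g) * lead_coeff (p (degree g))"
      using coeff_sum_smult_degree_seq[OF p, of c "degree g"] by (simp only: flip: c)
    then have "c (degree g) \<noteq> 0"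
      using that by auto
    moreover have "T g = (\<Sum>k\<le>degree g. smult (c k) (T (p k)))"
      by (subst c) (simp add: klinear_sum[OF T] klinear_smult[OF T])
    ultimately show ?thesis
      using sum_smult_degree_seq[OF Tp] by simp
  qed
  then show "degree (T g) = degree g" "T g = 0 \<longleftrightarrow> g = 0"
    by (cases "g = 0"; simp add: klinear_0[OF T])+
  have "inj T"
  proof (rule injI)
    fix g h
    assume "T g = T h"
    then have "T (g - h) = 0"
      by (simp add: klinear_diff[OF T])
    then show "g = h"
      using image_nonzero[of "g - h"] by auto
  qed
  moreover have "g \<in> range T" for g
  proof -
    obtain c where "g = (\<Sum>k\<le>degree g. smult (c k) (T (p k)))"
      using degree_seq_expansion[OF Tp order_refl] by blast
    then have "g = T (\<Sum>k\<le>degree g. smult (c k) (p k))"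
      by (simp add: klinear_sum[OF T] klinear_smult[OF T])
    then show ?thesis
      by blast
  qed
  ultimately show "bij T"
    by (auto intro: bijI)
qed

lemma degree_seq_inv_image:
  assumes "bij T" "\<And>g. degree (T g) = degree g" "\<And>g. T g = 0 \<longleftrightarrow> g = 0" "degree_seq p"
  shows "degree_seq (\<lambda>n. inv T (p n))"
  using assms unfolding degree_seq_def by (metis bij_inv_eq_iff)

lemma eps_y_add: "eps_y (a + b) = eps_y a + eps_y b"
  by (simp add: eps_y_def)

lemma eps_y_smult: "eps_y (smult [:c:] H) = smult c (eps_y H)"
  by (simp add: eps_y_def)

lemma eps_y_sum: "eps_y (\<Sum>k\<in>A. f k) = (\<Sum>k\<in>A. eps_y (f k))"
  by (simp add: eps_y_def poly_sum)

lemma eps_y_xlift_ylift: "eps_y (xlift a * ylift b) = smult (poly b 0) a"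
  by (simp add: eps_y_def xlift_def ylift_def poly_0_coeff_0 coeff_map_poly)

lemma eps_y_shift2: "eps_y (shift2 c H) = shift c (eps_y H)"
  by (simp add: eps_y_def shift2_def poly_0_coeff_0 coeff_map_poly shift_def)

lemma klinear_eps_y_comp: "klinear2 F \<Longrightarrow> klinear (eps_y \<circ> F)"
  by (simp add: klinear_def klinear2_def eps_y_add eps_y_smult)

lemma shift_invariant_eps_y_comp: "shift_invariant2 F \<Longrightarrow> shift_invariant (eps_y \<circ> F)"
  by (simp add: shift_invariant_def shift_invariant2_def eps_y_shift2)

lemma degree_seq_eps_y_convolution:
  fixes p :: "nat \<Rightarrow> 'a::idom poly"
  assumes p: "degree_seq p"
  shows "degree_seq (\<lambda>n. eps_y (\<Sum>k\<le>n. xlift (p k) * ylift (p (n - k))))"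
  unfolding degree_seq_def
proof
  fix n
  have "poly (p 0) 0 \<noteq> 0"
    using p unfolding degree_seq_def by (metis degree_0_id pCons_0_0 poly_0_coeff_0)
  then show "eps_y (\<Sum>k\<le>n. xlift (p k) * ylift (p (n - k))) \<noteq> 0 \<and>
      degree (eps_y (\<Sum>k\<le>n. xlift (p k) * ylift (p (n - k)))) = n"
    using sum_smult_degree_seq[OF p, of "\<lambda>k. poly (p (n - k)) 0" n]
    by (simp add: eps_y_sum eps_y_xlift_ylift)
qed

lemma swapxy_convolution:
  fixes f :: "nat \<Rightarrow> 'a::comm_ring_1 poly"
  shows "swapxy (\<Sum>k\<le>n. xlift (f k) * ylift (f (n - k))) = (\<Sum>k\<le>n. xlift (f k) * ylift (f (n - k)))"
  using sum.atLeastAtMost_rev[of "\<lambda>k. xlift (f (n - k)) * ylift (f k)" 0 n]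
  by (simp add: swapxy_sum swapxy_xlift_ylift atMost_atLeast0)

lemma klinear2_swapxy_comp: "klinear2 F \<Longrightarrow> klinear2 (\<lambda>g. swapxy (F g))"
  by (simp add: klinear2_def swapxy_add swapxy_smult)

lemma klinear2_eq_on_degree_seq:
  fixes p :: "nat \<Rightarrow> 'a::field poly"
  assumes "klinear2 F" "klinear2 G" "degree_seq p" "\<And>n. F (p n) = G (p n)"
  shows "F g = G g"
proof -
  obtain c where c: "g = (\<Sum>k\<le>degree g. smult (c k) (p k))"
    using degree_seq_expansion[OF assms(3) order_refl] by blast
  have "F g = (\<Sum>k\<le>degree g. smult [:c k:] (F (p k)))"
    by (subst c) (simp add: klinear2_sum[OF assms(1)] klinear2_smult[OF assms(1)])
  also have "\<dots> = (\<Sum>k\<le>degree g. smult [:c k:] (G (p k)))"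
    by (simp add: assms(4))
  also have "\<dots> = G g"
    by (subst (2) c) (simp add: klinear2_sum[OF assms(2)] klinear2_smult[OF assms(2)])
  finally show ?thesis .
qed

text \<open>Evaluating y at c and using the symmetry twice:
  F f (x, c) = F f (c, x) = F (E^c f) (0, x) = F (E^c f) (x, 0) = (E^c (eps_y (F f))) (x).\<close>
lemma symmetric_shift_invariant2_eq_Ey:
  fixes F :: "'a::{idom,ring_char_0} poly \<Rightarrow> 'a poly poly"
  assumes shift: "shift_invariant2 F" and sym: "\<And>g. swapxy (F g) = F g"
  shows "F f = Ey (eps_y (F f))"
proof (rule poly_const_eqI)
  fix c :: 'a
  have eval_shift: "(\<lambda>q. poly q 0) \<circ> shift c = (\<lambda>q. poly q c)"
    by (auto simp: shift_def poly_pcompose)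
  have "poly (F f) [:c:] = poly (swapxy (F f)) [:c:]"
    using sym by simp
  also have "\<dots> = map_poly (\<lambda>q. poly q 0) (map_poly (shift c) (F f))"
    by (simp add: poly_swapxy_const map_poly_map_poly shift_def eval_shift)
  also have "\<dots> = map_poly (\<lambda>q. poly q 0) (F (shift c f))"
    using shift by (simp add: shift_invariant2_def shift2_def)
  also have "\<dots> = eps_y (F (shift c f))"
    using sym[of "shift c f"] by (simp add: eps_y_def flip: poly_swapxy_const)
  also have "\<dots> = poly (Ey (eps_y (F f))) [:c:]"
    using shift by (simp add: eps_y_shift2 shift_invariant2_def poly_Ey_const)
  finally show "poly (F f) [:c:] = poly (Ey (eps_y (F f))) [:c:]" .
qed

lemma convolution_eq_Ey_eps_y:
  fixes F :: "'a::field_char_0 poly \<Rightarrow> 'a poly poly"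
  assumes p: "degree_seq p" and F: "klinear2 F" "shift_invariant2 F"
    and conv: "\<And>n. F (p n) = (\<Sum>k\<le>n. xlift (p k) * ylift (p (n - k)))"
  shows "F r = Ey (eps_y (F r))"
proof (rule symmetric_shift_invariant2_eq_Ey[OF F(2)])
  show "swapxy (F g) = F g" for g
    using klinear2_eq_on_degree_seq[OF klinear2_swapxy_comp[OF F(1)] F(1) p]
    by (simp add: conv swapxy_convolution)
qed

lemma sheffer_rel_inv:
  fixes P Q :: "'a::{idom,ring_char_0} poly \<Rightarrow> 'a poly"
  assumes Q: "klinear Q" "shift_invariant Q" and QP: "\<And>g. Q (P g) = g"
    and p: "degree_seq p"
    and binomial: "\<And>n. Ey (P (p n)) = (\<Sum>k\<le>n. xlift (p k) * ylift (p (n - k)))"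
  shows "sheffer_rel (\<lambda>n. Q (p n)) p"
proof -
  have "Ey (p n) = (\<Sum>k\<le>n. ylift (Q (p (n - k))) * xlift (p k))" for n
  proof -
    have "Ey (p n) = op_y Q (Ey (P (p n)))"
      by (simp add: op_y_Ey[OF Q] QP)
    also have "\<dots> = (\<Sum>k\<le>n. xlift (p k) * ylift (Q (p (n - k))))"
      by (simp add: binomial op_y_sum[OF Q(1)] op_y_xlift_ylift[OF Q(1)])
    finally show ?thesis
      by (simp add: mult.commute)
  qed
  then show ?thesis
    using p by (simp add: sheffer_rel_def)
qed

lemma divided_power_seq_if_sheffer_rel:
  fixes Q :: "'a::{idom,ring_char_0} poly \<Rightarrow> 'a poly"
  assumes sheffer: "sheffer_rel (\<lambda>n. Q (s n)) s" and Q: "klinear Q" "shift_invariant Q"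
    and deg: "degree_seq (\<lambda>n. Q (s n))"
  shows "divided_power_seq (\<lambda>n. Q (s n))"
proof -
  have "Ey (Q (s n)) = (\<Sum>k\<le>n. xlift (Q (s k)) * ylift (Q (s (n - k))))" for n
  proof -
    have "Ey (Q (s n)) = map_poly Q (Ey (s n))"
      by (simp add: map_poly_klinear_Ey[OF Q])
    also have "\<dots> = map_poly Q (\<Sum>k\<le>n. xlift (s k) * ylift (Q (s (n - k))))"
      using sheffer by (simp add: sheffer_rel_def mult.commute)
    also have "\<dots> = (\<Sum>k\<le>n. xlift (Q (s k)) * ylift (Q (s (n - k))))"
      by (simp add: map_poly_klinear_sum[OF Q(1)] map_poly_klinear_xlift_ylift[OF Q(1)])
    finally show ?thesis .
  qed
  then show ?thesis
    using deg by (simp add: divided_power_seq_def)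
qed

lemma convolution_if_sheffer_rel:
  assumes P: "klinear P" and PQ: "\<And>g. P (Q g) = g" and sheffer: "sheffer_rel (\<lambda>n. Q (p n)) p"
    and F: "\<And>r. F r = op_y P (Ey r)"
  shows "F (p n) = (\<Sum>k\<le>n. xlift (p k) * ylift (p (n - k)))"
proof -
  have "F (p n) = op_y P (\<Sum>k\<le>n. xlift (p k) * ylift (Q (p (n - k))))"
    using sheffer by (simp add: F sheffer_rel_def mult.commute)
  then show ?thesis
    by (simp add: op_y_sum[OF P] op_y_xlift_ylift[OF P] PQ)
qed

theorem theorem1:
  fixes p :: "nat \<Rightarrow> 'a::field_char_0 poly"
    and F :: "'a poly \<Rightarrow> 'a poly poly"
  assumes "degree_seq p"
    and "klinear2 F"
    and "shift_invariant2 F"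
  shows "(\<forall>n. F (p n) = (\<Sum>k\<le>n. xlift (p k) * ylift (p (n - k))))
     \<longleftrightarrow>
     (klinear (eps_y \<circ> F) \<and> shift_invariant (eps_y \<circ> F) \<and> bij (eps_y \<circ> F) \<and>
      divided_power_seq (\<lambda>n. inv (eps_y \<circ> F) (p n)) \<and>
      sheffer_rel (\<lambda>n. inv (eps_y \<circ> F) (p n)) p \<and>
      (\<forall>r. F r = op_y (eps_y \<circ> F) (Ey r)))"
proof -
  let "?convolution \<longleftrightarrow> ?structure" = ?thesis
  define P where "P = eps_y \<circ> F"
  have lin: "klinear P" and shift: "shift_invariant P"
    using assms by (simp_all add: P_def klinear_eps_y_comp shift_invariant_eps_y_comp)
  have ?structure if conv: ?convolution
  proof -
    have "degree_seq (\<lambda>n. P (p n))"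
      using degree_seq_eps_y_convolution[OF assms(1)] conv by (simp add: P_def)
    note P_image = klinear_degree_seq_image[OF lin assms(1) this]
    have FE: "F r = Ey (P r)" for r
      using convolution_eq_Ey_eps_y[OF assms] conv by (simp add: P_def)
    have inv_lin: "klinear (inv P)"
      by (rule klinear_inv[OF lin P_image(3)])
    have inv_shift: "shift_invariant (inv P)"
      by (rule shift_invariant_inv[OF shift P_image(3)])
    have sheffer: "sheffer_rel (\<lambda>n. inv P (p n)) p"
      using sheffer_rel_inv[OF inv_lin inv_shift inv_f_f[OF bij_is_inj[OF P_image(3)]] assms(1)] conv
      by (simp flip: FE)
    moreover have "divided_power_seq (\<lambda>n. inv P (p n))"
      using divided_power_seq_if_sheffer_rel[OF sheffer inv_lin inv_shift]
        degree_seq_inv_image[OF P_image(3,1,2) assms(1)] by simp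
    ultimately show ?thesis
      unfolding P_def[symmetric] using lin shift P_image(3) by (simp add: FE op_y_Ey)
  qed
  moreover have ?convolution if ?structure
  proof -
    have "klinear P" "\<And>g. P (inv P g) = g" "sheffer_rel (\<lambda>n. inv P (p n)) p"
      "\<And>r. F r = op_y P (Ey r)"
      using that unfolding P_def[symmetric] by (simp_all add: bij_is_surj surj_f_inv_f)
    then show ?thesis
      by (blast intro: convolution_if_sheffer_rel)
  qed
  ultimately show ?thesis
    by blast
qed

end
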